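(* In the setting described in the context, for every $k\in\{1,\dots,p\}$ the function $\delta_k$ belongs to $\mathcal F$, and for every $k\in\{2,\dots,p\}$ the function $f_k$ belongs to $\mathcal F$.
   Context: Let $p\ge1$, $\bar{\boldsymbol y}\in\mathbb R^p$, weights $n_1,\dots,n_p\ge1$, and $\tilde\lambda_0,\tilde\lambda\ge0$. For $i\in[p]$ let $e_i(x)=-\frac{n_i}{2}(x-\bar y_i)^2+\tilde\lambda_0\mathbf 1(x=0)$, $x\in\mathbb R$ ($\mathbf 1$ the indicator). Define recursively $\delta_1=e_1$ and, for $k=2,\dots,p$, $f_k(b)=\sup_{\tilde b\in\mathbb R}\big[\delta_{k-1}(\tilde b)-\tilde\lambda\mathbf 1(b\ne\tilde b)\big]$ (equivalently $\max\{\delta_{k-1}(b),\sup_{\tilde b}\delta_{k-1}(\tilde b)-\tilde\lambda\}$) and $\delta_k=e_k+f_k$. Let $\mathcal Q$ be the set of piecewise quadratic functions $x\mapsto\sum_{i=1}^{m+1}\mathbf 1(x\in(x_{i-1},x_i])(a_ix^2+b_ix+c_i)$ with $m\ge0$, $-\infty=x_0\le x_1\le\dots\le x_{m+1}=\infty$ and real $a_i,b_i,c_i$. Let $\mathcal S$ be the set of positive spike functions $x\mapsto\sum_{i=1}^{m}s_i\mathbf 1(x=x_i)$ with $m\ge0$, $x_i\in\mathbb R$, $s_i>0$. Let $\mathcal F=\{Q+S:Q\in\mathcal Q,S\in\mathcal S\}$. *)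

theory Defs
  imports Complex_Main "HOL-Library.Extended_Real"
begin

text \<open>Indices are 1-based: \<open>ybar i\<close>, \<open>nw i\<close> for \<open>i \<in> {1..p}\<close>.\<close>

definition e_fn :: "(nat \<Rightarrow> nat) \<Rightarrow> (nat \<Rightarrow> real) \<Rightarrow> real \<Rightarrow> nat \<Rightarrow> real \<Rightarrow> real" where
  "e_fn nw ybar lam0 i x =
     - (real (nw i) / 2) * (x - ybar i)^2 + lam0 * (if x = 0 then 1 else 0)"

definition fstep :: "real \<Rightarrow> (real \<Rightarrow> real) \<Rightarrow> real \<Rightarrow> real" where
  "fstep lam d b = (SUP bt. d bt - lam * (if b \<noteq> bt then 1 else 0))"

text \<open>\<open>delta_fn \<dots> k\<close> is \<open>\<delta>_k\<close> for \<open>k \<ge> 1\<close>; the value at \<open>k = 0\<close> is an unused dummy.\<close>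
fun delta_fn :: "(nat \<Rightarrow> nat) \<Rightarrow> (nat \<Rightarrow> real) \<Rightarrow> real \<Rightarrow> real \<Rightarrow> nat \<Rightarrow> real \<Rightarrow> real" where
  "delta_fn nw ybar lam0 lam 0 = (\<lambda>x. 0)"
| "delta_fn nw ybar lam0 lam (Suc 0) = e_fn nw ybar lam0 1"
| "delta_fn nw ybar lam0 lam (Suc (Suc j)) =
     (\<lambda>x. e_fn nw ybar lam0 (Suc (Suc j)) x + fstep lam (delta_fn nw ybar lam0 lam (Suc j)) x)"

definition f_fn :: "(nat \<Rightarrow> nat) \<Rightarrow> (nat \<Rightarrow> real) \<Rightarrow> real \<Rightarrow> real \<Rightarrow> nat \<Rightarrow> real \<Rightarrow> real" where
  "f_fn nw ybar lam0 lam k = fstep lam (delta_fn nw ybar lam0 lam (k - 1))"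

definition PQ :: "(real \<Rightarrow> real) set" where
  "PQ = {g. \<exists>(m::nat) (xs::nat \<Rightarrow> ereal) (a::nat \<Rightarrow> real) b c.
      xs 0 = -\<infinity> \<and> xs (m+1) = \<infinity> \<and> (\<forall>i\<in>{1..m}. \<bar>xs i\<bar> \<noteq> \<infinity>) \<and>
      (\<forall>i\<le>m. xs i \<le> xs (Suc i)) \<and>
      (\<forall>x. g x = (\<Sum>i=1..m+1. (if ereal x \<in> {xs (i-1)<..xs i} then 1 else 0)
                                   * (a i * x^2 + b i * x + c i)))}"

definition PS :: "(real \<Rightarrow> real) set" where
  "PS = {g. \<exists>(m::nat) (xs::nat \<Rightarrow> real) (s::nat \<Rightarrow> real).
      (\<forall>i\<in>{1..m}. s i > 0) \<and>
      (\<forall>x. g x = (\<Sum>i=1..m. s i * (if x = xs i then 1 else 0)))}"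

definition PF :: "(real \<Rightarrow> real) set" where
  "PF = {g. \<exists>q\<in>PQ. \<exists>s\<in>PS. g = (\<lambda>x. q x + s x)}"

end

theory Submission
  imports Defs
begin

(* Every e_i is bounded above by lam0, hence so is every delta_k, and then
   f_k(b) = max (delta_(k-1)(b)) (sup delta_(k-1) - lam).  So it suffices that F contains every
   e_i and is closed under sums and under the maximum with a constant.  For the spike part this
   holds because max (q + s) c - max q c lies between 0 and s.  For the quadratic part we use the
   functions obtained from quadratics by repeatedly splicing two of them at a point: both closure
   properties follow by induction over the splicing, the only real input being that a quadratic
   minus a constant changes sign at most twice. *)

section \<open>Piecewise quadratics given by breakpoints\<close>

definition breakpoints :: "nat \<Rightarrow> (nat \<Rightarrow> ereal) \<Rightarrow> bool" where
  "breakpoints m xs \<longleftrightarrow> xs 0 = -\<infinity> \<and> xs (m+1) = \<infinity> \<and> (\<forall>i\<in>{1..m}. \<bar>xs i\<bar> \<noteq> \<infinity>) \<and>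
     (\<forall>i\<le>m. xs i \<le> xs (Suc i))"

definition pw_quadratic_rep ::
    "nat \<Rightarrow> (nat \<Rightarrow> ereal) \<Rightarrow> (nat \<Rightarrow> real) \<Rightarrow> (nat \<Rightarrow> real) \<Rightarrow> (nat \<Rightarrow> real) \<Rightarrow> (real \<Rightarrow> real) \<Rightarrow> bool"
  where
  "pw_quadratic_rep m xs a b c g \<longleftrightarrow> breakpoints m xs \<and>
     (\<forall>i\<in>{1..m+1}. \<forall>x. ereal x \<in> {xs (i-1)<..xs i} \<longrightarrow> g x = a i * x^2 + b i * x + c i)"

lemma pw_quadratic_rep_eval:
  assumes "pw_quadratic_rep m xs a b c g" "i \<in> {1..m+1}" "ereal x \<in> {xs (i-1)<..xs i}"
  shows "g x = a i * x^2 + b i * x + c i"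
  using assms unfolding pw_quadratic_rep_def by blast

lemma breakpoints_mono:
  assumes "breakpoints m xs" "i \<le> j" "j \<le> m+1"
  shows "xs i \<le> xs j"
proof (rule lift_Suc_mono_le_ivl[of "{..m}"])
  show "xs n \<le> xs (Suc n)" if "n \<in> {..m}" for n
    using assms(1) that by (simp add: breakpoints_def)
qed (use assms in auto)

lemma breakpoints_piece_unique:
  assumes "breakpoints m xs" "i \<in> {1..m+1}" "j \<in> {1..m+1}"
    and "ereal x \<in> {xs (i-1)<..xs i}" "ereal x \<in> {xs (j-1)<..xs j}"
  shows "i = j"
proof (rule ccontr)
  assume "i \<noteq> j"
  then have "xs (min i j) \<le> xs (max i j - 1)"
    using assms(2,3) by (intro breakpoints_mono[OF assms(1)]) auto
  then show False
    using assms(4,5) by (cases "i \<le> j") (auto simp: min_def max_def)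
qed

lemma breakpoints_piece_exists:
  assumes "breakpoints m xs"
  obtains i where "i \<in> {1..m+1}" "ereal x \<in> {xs (i-1)<..xs i}"
proof -
  define i where "i = (LEAST i. ereal x \<le> xs i)"
  have "ereal x \<le> xs (m+1)" using assms by (simp add: breakpoints_def)
  then have i: "ereal x \<le> xs i" "i \<le> m+1"
    unfolding i_def by (auto intro: LeastI Least_le)
  moreover have "i \<noteq> 0"
    using i(1) assms by (cases "i = 0") (auto simp: breakpoints_def)
  moreover have "\<not> ereal x \<le> xs (i-1)"
    using \<open>i \<noteq> 0\<close> not_less_Least[of "i-1" "\<lambda>i. ereal x \<le> xs i"] by (simp add: i_def)
  ultimately show ?thesis by (intro that[of i]) auto
qed

lemma pw_quadratic_rep_in_PQ:
  assumes rep: "pw_quadratic_rep m xs a b c g"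
  shows "g \<in> PQ"
proof -
  let ?piece = "\<lambda>x i. if ereal x \<in> {xs (i-1)<..xs i} then 1 else 0 :: real"
  let ?q = "\<lambda>x i. a i * x^2 + b i * x + c i"
  have bp: "breakpoints m xs" using rep by (simp add: pw_quadratic_rep_def)
  have pieces: "\<forall>x. g x = (\<Sum>i=1..m+1. ?piece x i * ?q x i)"
  proof
    fix x
    obtain i where i: "i \<in> {1..m+1}" "ereal x \<in> {xs (i-1)<..xs i}"
      using breakpoints_piece_exists[OF bp] .
    have "?piece x j * ?q x j = (if j = i then ?q x i else 0)" if "j \<in> {1..m+1}" for j
      using breakpoints_piece_unique[OF bp that i(1) _ i(2)] i(2)
      by (cases "j = i") (auto simp del: greaterThanAtMost_iff)
    then have "(\<Sum>j=1..m+1. ?piece x j * ?q x j) = (\<Sum>j=1..m+1. if j = i then ?q x i else 0)"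
      by (rule sum.cong[OF refl])
    also have "\<dots> = g x"
      using i by (simp add: pw_quadratic_rep_eval[OF rep])
    finally show "g x = (\<Sum>i=1..m+1. ?piece x i * ?q x i)" ..
  qed
  show ?thesis
    unfolding PQ_def mem_Collect_eq using bp pieces unfolding breakpoints_def
    by (intro exI[of _ m] exI[of _ xs] exI[of _ a] exI[of _ b] exI[of _ c]) (elim conjE; intro conjI)
qed

lemma breakpoints_splice:
  assumes bp1: "breakpoints m1 xs1" and bp2: "breakpoints m2 xs2"
  shows "breakpoints (m1+m2+1)
           (\<lambda>i. if i \<le> m1 then min (xs1 i) (ereal t) else max (xs2 (i-(m1+1))) (ereal t))"
    (is "breakpoints _ ?xs")
proof -
  have finite: "\<bar>?xs i\<bar> \<noteq> \<infinity>" if i: "i \<in> {1..m1+m2+1}" for i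
  proof -
    have "i \<le> m1 \<or> i = m1+1 \<or> i - (m1+1) \<in> {1..m2}"
      using i by simp arith
    then consider "i \<le> m1" | "i = m1+1" | "i - (m1+1) \<in> {1..m2}"
      by blast
    then show ?thesis
      using bp1 bp2 i by cases (auto simp: breakpoints_def min_def max_def)
  qed
  have step: "?xs i \<le> ?xs (Suc i)" if "i \<le> m1+m2+1" for i
  proof -
    consider "i < m1" | "i = m1" | "m1 < i" by linarith
    then show ?thesis
    proof cases
      case 1
      then have "xs1 i \<le> xs1 (Suc i)" using bp1 by (simp add: breakpoints_def)
      then show ?thesis using 1 by (simp add: min_le_iff_disj)
    next
      case 2
      then show ?thesis using bp2 by (simp add: breakpoints_def)
    next
      case 3
      define j where "j = i - (m1+1)"
      have "xs2 j \<le> xs2 (Suc j)" using bp2 that by (simp add: breakpoints_def j_def)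
      then have "max (xs2 j) (ereal t) \<le> max (xs2 (Suc j)) (ereal t)" by (rule max.mono) simp
      moreover have "Suc i - (m1+1) = Suc j" using 3 by (simp add: j_def)
      ultimately show ?thesis using 3 by (simp add: j_def)
    qed
  qed
  show ?thesis
    using bp1 bp2 finite step by (simp add: breakpoints_def)
qed

lemma greaterThanAtMost_min_iff:
  fixes x a b t :: "'a::linorder"
  shows "x \<in> {min a t<..min b t} \<longleftrightarrow> x \<le> t \<and> x \<in> {a<..b}"
  by (auto simp: min_less_iff_disj)

lemma greaterThanAtMost_max_iff:
  fixes x a b t :: "'a::linorder"
  shows "x \<in> {max a t<..max b t} \<longleftrightarrow> t < x \<and> x \<in> {a<..b}"
  by (auto simp: le_max_iff_disj)

lemma pw_quadratic_rep_splice: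
  assumes rep1: "pw_quadratic_rep m1 xs1 a1 b1 c1 g1" and rep2: "pw_quadratic_rep m2 xs2 a2 b2 c2 g2"
  shows "\<exists>m xs a b c. pw_quadratic_rep m xs a b c (\<lambda>x. if x \<le> t then g1 x else g2 x)"
proof -
  \<comment> \<open>the breakpoints of g1 capped at t, then those of g2 raised to t; the pieces of g1
    beyond t and of g2 before t become empty\<close>
  define xs where
    "xs = (\<lambda>i. if i \<le> m1 then min (xs1 i) (ereal t) else max (xs2 (i-(m1+1))) (ereal t))"
  define join :: "(nat \<Rightarrow> real) \<Rightarrow> (nat \<Rightarrow> real) \<Rightarrow> nat \<Rightarrow> real" where
    "join u v i = (if i \<le> m1+1 then u i else v (i-(m1+1)))" for u v i
  have bp: "breakpoints (m1+m2+1) xs"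
    using rep1 rep2 unfolding xs_def pw_quadratic_rep_def by (blast intro: breakpoints_splice)
  have ends: "xs1 (m1+1) = \<infinity>" "xs2 0 = -\<infinity>"
    using rep1 rep2 by (simp_all add: pw_quadratic_rep_def breakpoints_def)
  then have xs_low: "xs i = min (xs1 i) (ereal t)" if "i \<le> m1+1" for i
    using that by (cases "i = m1+1") (simp_all add: xs_def)
  from ends have xs_high: "xs i = max (xs2 (i-(m1+1))) (ereal t)" if "m1+1 \<le> i" for i
    using that by (cases "i = m1+1") (simp_all add: xs_def)
  have "(if x \<le> t then g1 x else g2 x) = join a1 a2 i * x^2 + join b1 b2 i * x + join c1 c2 i"
    if i: "i \<in> {1..m1+m2+2}" and x: "ereal x \<in> {xs (i-1)<..xs i}" for i x
  proof (cases "i \<le> m1+1")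
    case True
    then have "xs (i-1) = min (xs1 (i-1)) (ereal t)" "xs i = min (xs1 i) (ereal t)"
      by (simp_all add: xs_low)
    with x have "ereal x \<le> ereal t \<and> ereal x \<in> {xs1 (i-1)<..xs1 i}"
      by (simp only: greaterThanAtMost_min_iff)
    then show ?thesis using i True by (simp add: join_def pw_quadratic_rep_eval[OF rep1])
  next
    case False
    then have "xs (i-1) = max (xs2 (i-(m1+1)-1)) (ereal t)" "xs i = max (xs2 (i-(m1+1))) (ereal t)"
      by (simp_all add: xs_high diff_commute[of i 1])
    with x have "ereal t < ereal x \<and> ereal x \<in> {xs2 (i-(m1+1)-1)<..xs2 (i-(m1+1))}"
      by (simp only: greaterThanAtMost_max_iff)
    moreover have "i - (m1+1) \<in> {1..m2+1}" using i False by auto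
    ultimately show ?thesis using False by (simp add: join_def pw_quadratic_rep_eval[OF rep2])
  qed
  with bp have "pw_quadratic_rep (m1+m2+1) xs (join a1 a2) (join b1 b2) (join c1 c2)
      (\<lambda>x. if x \<le> t then g1 x else g2 x)"
    by (simp add: pw_quadratic_rep_def)
  then show ?thesis by blast
qed

section \<open>Functions spliced from quadratics\<close>

inductive_set spliced_quadratics :: "(real \<Rightarrow> real) set" where
  quadratic: "(\<lambda>x. a * x^2 + b * x + c) \<in> spliced_quadratics"
| splice: "g1 \<in> spliced_quadratics \<Longrightarrow> g2 \<in> spliced_quadratics \<Longrightarrow>
    (\<lambda>x. if x \<le> t then g1 x else g2 x) \<in> spliced_quadratics"

lemma spliced_quadratics_subset_PQ: "spliced_quadratics \<subseteq> PQ"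
proof
  fix g assume "g \<in> spliced_quadratics"
  then have "\<exists>m xs a b c. pw_quadratic_rep m xs a b c g"
  proof induction
    case (quadratic a b c)
    have "pw_quadratic_rep 0 (\<lambda>i. if i = 0 then -\<infinity> else \<infinity>) (\<lambda>_. a) (\<lambda>_. b) (\<lambda>_. c)
        (\<lambda>x. a * x^2 + b * x + c)"
      by (simp add: pw_quadratic_rep_def breakpoints_def)
    then show ?case by blast
  next
    case (splice g1 g2 t)
    then show ?case using pw_quadratic_rep_splice by blast
  qed
  then show "g \<in> PQ" using pw_quadratic_rep_in_PQ by blast
qed

lemma spliced_quadratics_const: "(\<lambda>x. c) \<in> spliced_quadratics"
  using spliced_quadratics.quadratic[of 0 0 c] by simp

lemma spliced_quadratics_add_quadratic:
  "h \<in> spliced_quadratics \<Longrightarrow> (\<lambda>x. a * x^2 + b * x + c + h x) \<in> spliced_quadratics"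
proof (induction rule: spliced_quadratics.induct)
  case (quadratic a' b' c')
  have "(\<lambda>x. a * x^2 + b * x + c + (a' * x^2 + b' * x + c')) =
        (\<lambda>x. (a + a') * x^2 + (b + b') * x + (c + c'))"
    by (simp add: fun_eq_iff algebra_simps)
  then show ?case by (metis spliced_quadratics.quadratic)
next
  case (splice g1 g2 t)
  then show ?case
    using spliced_quadratics.splice[OF splice.IH, of t] by (simp add: if_distrib)
qed

lemma spliced_quadratics_add:
  "g \<in> spliced_quadratics \<Longrightarrow> h \<in> spliced_quadratics \<Longrightarrow> (\<lambda>x. g x + h x) \<in> spliced_quadratics"
proof (induction rule: spliced_quadratics.induct)
  case (quadratic a b c)
  then show ?case by (rule spliced_quadratics_add_quadratic)
next
  case (splice g1 g2 t)
  have "(\<lambda>x. (if x \<le> t then g1 x else g2 x) + h x) =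
        (\<lambda>x. if x \<le> t then g1 x + h x else g2 x + h x)"
    by auto
  then show ?case
    using spliced_quadratics.splice[OF splice.IH, of t] splice.prems by simp
qed

lemma spliced_quadratics_three_pieces:
  assumes "P1 \<in> spliced_quadratics" "\<forall>x\<in>{..r1}. g x = P1 x"
    and "P2 \<in> spliced_quadratics" "\<forall>x\<in>{r1<..r2}. g x = P2 x"
    and "P3 \<in> spliced_quadratics" "\<forall>x\<in>{r2<..}. g x = P3 x"
  shows "g \<in> spliced_quadratics"
proof -
  have "g = (\<lambda>x. if x \<le> r1 then P1 x else (\<lambda>x. if x \<le> r2 then P2 x else P3 x) x)"
    using assms(2,4,6) by (force simp: fun_eq_iff)
  then show ?thesis
    using assms(1,3,5) by (simp add: spliced_quadratics.splice)
qed

definition sign_constant_on :: "(real \<Rightarrow> real) \<Rightarrow> real set \<Rightarrow> bool" where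
  "sign_constant_on h I \<longleftrightarrow> (\<forall>x\<in>I. 0 \<le> h x) \<or> (\<forall>x\<in>I. h x \<le> 0)"

lemma sign_constant_on_factored:
  fixes a r1 r2 :: real
  assumes "r1 \<le> r2"
  defines "h \<equiv> \<lambda>x. a * ((x - r1) * (x - r2))"
  shows "sign_constant_on h {..r1} \<and> sign_constant_on h {r1<..r2} \<and> sign_constant_on h {r2<..}"
proof -
  have "0 \<le> (x - r1) * (x - r2)" if "x \<le> r1" for x
    using that assms(1) by (intro mult_nonpos_nonpos) auto
  moreover have "(x - r1) * (x - r2) \<le> 0" if "r1 < x" "x \<le> r2" for x
    using that by (intro mult_nonneg_nonpos) auto
  moreover have "0 \<le> (x - r1) * (x - r2)" if "r2 < x" for x
    using that assms(1) by (intro mult_nonneg_nonneg) auto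
  ultimately show ?thesis
    unfolding sign_constant_on_def h_def
    by (cases "0 \<le> a") (auto simp: mult_le_0_iff zero_le_mult_iff)
qed

lemma quadratic_factor_real_roots:
  fixes a b e :: real
  assumes "a \<noteq> 0" "0 \<le> b^2 - 4*a*e"
  obtains r1 r2 where "r1 \<le> r2" "\<And>x. a * x^2 + b * x + e = a * ((x - r1) * (x - r2))"
proof -
  define s where "s = sqrt (b^2 - 4*a*e)"
  define p1 where "p1 = (- b - s) / (2*a)"
  define p2 where "p2 = (- b + s) / (2*a)"
  have s2: "s^2 = b^2 - 4*a*e" using assms(2) by (simp add: s_def)
  have root_sum: "p1 + p2 = - b / a" using assms(1) by (simp add: p1_def p2_def field_simps)
  have "p1 * p2 = (b^2 - s^2) / (4*a^2)"
    using assms(1) by (simp add: p1_def p2_def field_simps power2_eq_square)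
  also have "\<dots> = e / a"
    using assms(1) unfolding s2 by (simp add: field_simps power2_eq_square)
  finally have root_prod: "p1 * p2 = e / a" .
  have "a * x^2 + b * x + e = a * ((x - p1) * (x - p2))" for x
  proof -
    have "a * ((x - p1) * (x - p2)) = a * x^2 - a * (p1 + p2) * x + a * (p1 * p2)"
      by (simp add: algebra_simps power2_eq_square)
    also have "\<dots> = a * x^2 + b * x + e"
      using assms(1) by (simp add: root_sum root_prod)
    finally show ?thesis ..
  qed
  then show ?thesis
    using that[of "min p1 p2" "max p1 p2"]
    by (cases "p1 \<le> p2") (simp_all add: min_def max_def mult.commute)
qed

lemma quadratic_sign_pieces:
  fixes a b e :: real
  defines "h \<equiv> \<lambda>x. a * x^2 + b * x + e"
  shows "\<exists>r1 r2. sign_constant_on h {..r1} \<and> sign_constant_on h {r1<..r2} \<and> sign_constant_on h {r2<..}"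
proof -
  consider "a = 0" "b = 0" | "a = 0" "b \<noteq> 0" | "a \<noteq> 0" "b^2 - 4*a*e < 0" | "a \<noteq> 0" "b^2 - 4*a*e \<ge> 0"
    by fastforce
  then show ?thesis
  proof cases
    case 1
    then have "sign_constant_on h I" for I by (auto simp: sign_constant_on_def h_def)
    then show ?thesis by blast
  next
    case 2
    define r where "r = - e / b"
    have "h x = b * (x - r)" for x using 2 by (simp add: h_def r_def field_simps)
    then have "sign_constant_on h {..r} \<and> sign_constant_on h {r<..r} \<and> sign_constant_on h {r<..}"
      by (cases "0 \<le> b") (auto simp: sign_constant_on_def mult_le_0_iff zero_le_mult_iff)
    then show ?thesis by blast
  next
    case 3
    have "0 < a * h x" for x
    proof -
      have "4 * (a * h x) = (2*a*x + b)^2 - (b^2 - 4*a*e)"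
        by (simp add: h_def power2_eq_square algebra_simps)
      moreover have "0 \<le> (2*a*x + b)^2" by simp
      ultimately show ?thesis using 3 by linarith
    qed
    then have "sign_constant_on h I" for I
      by (cases "0 < a") (auto simp: sign_constant_on_def zero_less_mult_iff less_imp_le)
    then show ?thesis by blast
  next
    case 4
    then obtain r1 r2 where "r1 \<le> r2" "\<And>x. h x = a * ((x - r1) * (x - r2))"
      using quadratic_factor_real_roots[OF 4] unfolding h_def by blast
    then have "h = (\<lambda>x. a * ((x - r1) * (x - r2)))" by (simp add: fun_eq_iff)
    then show ?thesis
      using sign_constant_on_factored[OF \<open>r1 \<le> r2\<close>, of a] by blast
  qed
qed

lemma max_const_eq_on_sign_constant:
  assumes "sign_constant_on (\<lambda>x. q x - c) I" "q \<in> spliced_quadratics"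
  shows "\<exists>P\<in>spliced_quadratics. \<forall>x\<in>I. max (q x) c = P x"
proof -
  consider "\<forall>x\<in>I. c \<le> q x" | "\<forall>x\<in>I. q x \<le> c"
    using assms(1) unfolding sign_constant_on_def by auto
  then show ?thesis
  proof cases
    case 1
    then show ?thesis using assms(2) by (intro bexI[of _ q]) auto
  next
    case 2
    then show ?thesis using spliced_quadratics_const by (intro bexI[of _ "\<lambda>x. c"]) auto
  qed
qed

lemma spliced_quadratics_max_const:
  "g \<in> spliced_quadratics \<Longrightarrow> (\<lambda>x. max (g x) c) \<in> spliced_quadratics"
proof (induction rule: spliced_quadratics.induct)
  case (quadratic a b e)
  let ?q = "\<lambda>x. a * x^2 + b * x + e"
  have "(\<lambda>x. ?q x - c) = (\<lambda>x. a * x^2 + b * x + (e - c))" by (simp add: fun_eq_iff)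
  then obtain r1 r2 where sc: "sign_constant_on (\<lambda>x. ?q x - c) {..r1}"
      "sign_constant_on (\<lambda>x. ?q x - c) {r1<..r2}" "sign_constant_on (\<lambda>x. ?q x - c) {r2<..}"
    using quadratic_sign_pieces[of a b "e - c"] by auto
  note pieces = max_const_eq_on_sign_constant[OF _ spliced_quadratics.quadratic]
  obtain P1 where "P1 \<in> spliced_quadratics" "\<forall>x\<in>{..r1}. max (?q x) c = P1 x"
    using pieces[OF sc(1)] by blast
  moreover obtain P2 where "P2 \<in> spliced_quadratics" "\<forall>x\<in>{r1<..r2}. max (?q x) c = P2 x"
    using pieces[OF sc(2)] by blast
  moreover obtain P3 where "P3 \<in> spliced_quadratics" "\<forall>x\<in>{r2<..}. max (?q x) c = P3 x"
    using pieces[OF sc(3)] by blast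
  ultimately show ?case by (rule spliced_quadratics_three_pieces)
next
  case (splice g1 g2 t)
  have "(\<lambda>x. max (if x \<le> t then g1 x else g2 x) c) =
        (\<lambda>x. if x \<le> t then max (g1 x) c else max (g2 x) c)"
    by auto
  then show ?case
    using spliced_quadratics.splice[OF splice.IH] by simp
qed

section \<open>Spike functions\<close>

definition finite_spikes :: "(real \<Rightarrow> real) set" where
  "finite_spikes = {h. (\<forall>x. 0 \<le> h x) \<and> finite {x. h x \<noteq> 0}}"

lemma finite_spikes_subset_PS: "finite_spikes \<subseteq> PS"
proof
  fix h assume "h \<in> finite_spikes"
  then have nonneg: "\<forall>x. 0 \<le> h x" and fin: "finite {x. h x \<noteq> 0}"
    by (simp_all add: finite_spikes_def)
  define S where "S = {x. h x \<noteq> 0}"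
  obtain xs where xs: "bij_betw xs {1..card S} S"
    using ex_bij_betw_nat_finite_1[of S] fin by (auto simp: S_def)
  have "\<forall>i\<in>{1..card S}. h (xs i) > 0"
    using xs nonneg by (force simp: S_def bij_betw_def less_le)
  moreover have "h x = (\<Sum>i=1..card S. h (xs i) * (if x = xs i then 1 else 0))" for x
  proof -
    have "(\<Sum>i=1..card S. h (xs i) * (if x = xs i then 1 else 0)) =
          (\<Sum>y\<in>S. h y * (if x = y then 1 else 0))"
      using sum.reindex_bij_betw[OF xs, of "\<lambda>y. h y * (if x = y then 1 else 0)"] .
    also have "\<dots> = (\<Sum>y\<in>S. if x = y then h y else 0)"
      by (intro sum.cong) auto
    also have "\<dots> = h x"
      using fin by (simp add: S_def sum.delta')
    finally show ?thesis ..
  qed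
  ultimately show "h \<in> PS"
    unfolding PS_def
    by (intro CollectI exI[of _ "card S"] exI[of _ xs] exI[of _ "\<lambda>i. h (xs i)"]) blast
qed

lemma finite_spikes_add:
  assumes "s1 \<in> finite_spikes" "s2 \<in> finite_spikes"
  shows "(\<lambda>x. s1 x + s2 x) \<in> finite_spikes"
proof -
  have "{x. s1 x + s2 x \<noteq> 0} \<subseteq> {x. s1 x \<noteq> 0} \<union> {x. s2 x \<noteq> 0}" by auto
  with assms show ?thesis
    unfolding finite_spikes_def by (auto intro: finite_subset add_nonneg_nonneg)
qed

definition quadratics_plus_spikes :: "(real \<Rightarrow> real) set" where
  "quadratics_plus_spikes =
     {g. \<exists>q\<in>spliced_quadratics. \<exists>s\<in>finite_spikes. g = (\<lambda>x. q x + s x)}"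

lemma quadratics_plus_spikesI:
  "q \<in> spliced_quadratics \<Longrightarrow> s \<in> finite_spikes \<Longrightarrow> (\<lambda>x. q x + s x) \<in> quadratics_plus_spikes"
  unfolding quadratics_plus_spikes_def by blast

lemma quadratics_plus_spikes_subset_PF: "quadratics_plus_spikes \<subseteq> PF"
  unfolding quadratics_plus_spikes_def PF_def
  using spliced_quadratics_subset_PQ finite_spikes_subset_PS by blast

lemma quadratics_plus_spikes_add:
  assumes "g \<in> quadratics_plus_spikes" "h \<in> quadratics_plus_spikes"
  shows "(\<lambda>x. g x + h x) \<in> quadratics_plus_spikes"
proof -
  obtain q1 s1 q2 s2 where q1: "q1 \<in> spliced_quadratics" and s1: "s1 \<in> finite_spikes"
    and q2: "q2 \<in> spliced_quadratics" and s2: "s2 \<in> finite_spikes"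
    and g: "g = (\<lambda>x. q1 x + s1 x)" and h: "h = (\<lambda>x. q2 x + s2 x)"
    using assms unfolding quadratics_plus_spikes_def by blast
  have "(\<lambda>x. g x + h x) = (\<lambda>x. (q1 x + q2 x) + (s1 x + s2 x))"
    by (simp add: g h algebra_simps)
  also have "\<dots> \<in> quadratics_plus_spikes"
    by (rule quadratics_plus_spikesI[OF spliced_quadratics_add[OF q1 q2] finite_spikes_add[OF s1 s2]])
  finally show ?thesis .
qed

lemma quadratics_plus_spikes_max_const:
  assumes "g \<in> quadratics_plus_spikes"
  shows "(\<lambda>x. max (g x) c) \<in> quadratics_plus_spikes"
proof -
  obtain q s where q: "q \<in> spliced_quadratics" and s: "s \<in> finite_spikes"
    and g: "g = (\<lambda>x. q x + s x)"
    using assms unfolding quadratics_plus_spikes_def by blast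
  define r where "r x = max (q x + s x) c - max (q x) c" for x
  have s0: "0 \<le> s x" for x using s by (simp add: finite_spikes_def)
  have r_bounds: "0 \<le> r x \<and> r x \<le> s x" for x
    using s0[of x] by (auto simp: r_def max_def)
  then have "{x. r x \<noteq> 0} \<subseteq> {x. s x \<noteq> 0}" by (force intro: antisym)
  moreover have "\<forall>x. 0 \<le> r x" using r_bounds by blast
  ultimately have r: "r \<in> finite_spikes"
    using s unfolding finite_spikes_def by (auto intro: finite_subset)
  have "(\<lambda>x. max (g x) c) = (\<lambda>x. max (q x) c + r x)"
    by (simp add: g r_def)
  also have "\<dots> \<in> quadratics_plus_spikes"
    by (rule quadratics_plus_spikesI[OF spliced_quadratics_max_const[OF q] r])
  finally show ?thesis .
qed

lemma e_fn_in_quadratics_plus_spikes: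
  assumes "0 \<le> lam0"
  shows "e_fn nw ybar lam0 i \<in> quadratics_plus_spikes"
proof -
  define n where "n = real (nw i)"
  define y where "y = ybar i"
  have "(\<lambda>x. lam0 * (if x = 0 then 1 else 0)) \<in> finite_spikes"
    using assms by (auto simp: finite_spikes_def intro: finite_subset[of _ "{0}"])
  then have "(\<lambda>x. ((- n / 2) * x^2 + (n * y) * x + (- n / 2 * y^2)) + lam0 * (if x = 0 then 1 else 0))
      \<in> quadratics_plus_spikes"
    by (rule quadratics_plus_spikesI[OF spliced_quadratics.quadratic])
  moreover have "e_fn nw ybar lam0 i =
      (\<lambda>x. ((- n / 2) * x^2 + (n * y) * x + (- n / 2 * y^2)) + lam0 * (if x = 0 then 1 else 0))"
    by (simp add: fun_eq_iff e_fn_def n_def y_def power2_eq_square algebra_simps)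
  ultimately show ?thesis by simp
qed

lemma e_fn_le:
  assumes "0 \<le> lam0"
  shows "e_fn nw ybar lam0 i x \<le> lam0"
proof -
  have "- (real (nw i) / 2) * (x - ybar i)^2 \<le> 0" by simp
  moreover have "lam0 * (if x = 0 then 1 else 0) \<le> lam0" using assms by simp
  ultimately show ?thesis unfolding e_fn_def by linarith
qed

section \<open>The recursion\<close>

lemma fstep_eq_max:
  assumes bdd: "bdd_above (range d)" and "0 \<le> lam"
  shows "fstep lam d b = max (d b) (Sup (range d) - lam)"
proof -
  define g where "g bt = d bt - lam * (if b \<noteq> bt then 1 else 0)" for bt
  have g_le: "g bt \<le> d bt" and le_g: "d bt - lam \<le> g bt" for bt
    using \<open>0 \<le> lam\<close> by (simp_all add: g_def)
  obtain M where M: "d bt \<le> M" for bt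
    using bdd by (auto simp: bdd_above_def)
  have bdd_g: "bdd_above (range g)"
    by (intro bdd_aboveI2[where M = M]) (rule order.trans[OF g_le M])
  have "Sup (range g) \<le> max (d b) (Sup (range d) - lam)"
  proof (rule cSUP_least)
    show "g bt \<le> max (d b) (Sup (range d) - lam)" for bt
      using cSUP_upper[OF UNIV_I bdd, of bt] by (cases "b = bt") (auto simp: g_def)
  qed simp
  moreover have "d b \<le> Sup (range g)"
    using cSUP_upper[OF UNIV_I bdd_g, of b] by (simp add: g_def)
  moreover have "Sup (range d) \<le> Sup (range g) + lam"
  proof (rule cSUP_least)
    show "d bt \<le> Sup (range g) + lam" for bt
      using cSUP_upper[OF UNIV_I bdd_g, of bt] le_g[of bt] by linarith
  qed simp
  ultimately show ?thesis
    unfolding fstep_def g_def[symmetric] by linarith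
qed

lemma fstep_in_quadratics_plus_spikes:
  assumes "d \<in> quadratics_plus_spikes" "bdd_above (range d)" "0 \<le> lam"
  shows "fstep lam d \<in> quadratics_plus_spikes"
proof -
  have "fstep lam d = (\<lambda>b. max (d b) (Sup (range d) - lam))"
    using fstep_eq_max[OF assms(2,3)] by (rule ext)
  then show ?thesis
    using quadratics_plus_spikes_max_const[OF assms(1)] by simp
qed

lemma fstep_le_Sup:
  assumes "bdd_above (range d)" "0 \<le> lam"
  shows "fstep lam d b \<le> Sup (range d)"
  using fstep_eq_max[OF assms] cSUP_upper[OF UNIV_I assms(1)] assms(2) by simp

lemma delta_fn_quadratics_plus_spikes_bdd_above:
  assumes "0 \<le> lam0" "0 \<le> lam"
  shows "delta_fn nw ybar lam0 lam (Suc j) \<in> quadratics_plus_spikes \<and>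
         bdd_above (range (delta_fn nw ybar lam0 lam (Suc j)))"
proof (induction j)
  case 0
  have "bdd_above (range (e_fn nw ybar lam0 1))"
    by (intro bdd_aboveI2[where M = lam0]) (rule e_fn_le[OF assms(1)])
  then show ?case
    using e_fn_in_quadratics_plus_spikes[OF assms(1)] by simp
next
  case (Suc j)
  let ?d = "delta_fn nw ybar lam0 lam (Suc j)"
  have d: "?d \<in> quadratics_plus_spikes" "bdd_above (range ?d)"
    using Suc.IH by simp_all
  have "e_fn nw ybar lam0 (Suc (Suc j)) x + fstep lam ?d x \<le> lam0 + Sup (range ?d)" for x
    using e_fn_le[OF assms(1)] fstep_le_Sup[OF d(2) assms(2)] by (rule add_mono)
  then have "bdd_above (range (delta_fn nw ybar lam0 lam (Suc (Suc j))))"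
    by (intro bdd_aboveI2[where M = "lam0 + Sup (range ?d)"]) simp
  moreover have "delta_fn nw ybar lam0 lam (Suc (Suc j)) \<in> quadratics_plus_spikes"
    using quadratics_plus_spikes_add[OF e_fn_in_quadratics_plus_spikes[OF assms(1)]
        fstep_in_quadratics_plus_spikes[OF d assms(2)]]
    by simp
  ultimately show ?case by simp
qed

theorem lemmaA1:
  fixes p :: nat and ybar :: "nat \<Rightarrow> real" and nw :: "nat \<Rightarrow> nat"
    and lam0 lam :: real
  assumes "p \<ge> 1"
    and "\<forall>i\<in>{1..p}. nw i \<ge> 1"
    and "lam0 \<ge> 0" and "lam \<ge> 0"
  shows "(\<forall>k\<in>{1..p}. delta_fn nw ybar lam0 lam k \<in> PF)
       \<and> (\<forall>k\<in>{2..p}. f_fn nw ybar lam0 lam k \<in> PF)"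
proof -
  \<comment> \<open>the weights enter only through real (nw i) \<ge> 0\<close>
  note delta = delta_fn_quadratics_plus_spikes_bdd_above[OF assms(3,4), of nw ybar]
  have "delta_fn nw ybar lam0 lam k \<in> PF" if "k \<ge> 1" for k
    using delta[of "k - 1"] quadratics_plus_spikes_subset_PF that by (auto simp: Suc_diff_1)
  moreover have "f_fn nw ybar lam0 lam k \<in> PF" if "k \<ge> 2" for k
  proof -
    have "k - 1 = Suc (k - 2)" using that by simp
    then have "fstep lam (delta_fn nw ybar lam0 lam (k - 1)) \<in> quadratics_plus_spikes"
      using delta[of "k - 2"] fstep_in_quadratics_plus_spikes[OF _ _ assms(4)] by simp
    then show ?thesis
      using quadratics_plus_spikes_subset_PF by (auto simp: f_fn_def)
  qed
  ultimately show ?thesis by auto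
qed

end
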